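(* Let $v$ be a non-constant analytic function on $\mathbb{T}=\mathbb{R}/\mathbb{Z}$ whose shortest (positive) period is $1$. Then there exist $s\in\mathbb{N}$ and $c>0$ such that $$\max_{0\le l\le s}\left|\partial_\theta^l\big(v(\theta+\phi)-v(\theta)\big)\right|\ge c\|\phi\|_{\mathbb{T}}\quad\forall\theta,\phi\in\mathbb{T}.$$
   Context: $\|\phi\|_{\mathbb{T}}=\inf_{l\in\mathbb{Z}}|l-\phi|$. *)

theory Defs
  imports "HOL-Analysis.Analysis"
begin

definition real_analytic :: "(real \<Rightarrow> real) \<Rightarrow> bool" where
  "real_analytic f \<longleftrightarrow>
     (\<forall>x. \<exists>r>0. \<exists>a::nat \<Rightarrow> real. \<forall>y. \<bar>y - x\<bar> < r \<longrightarrow> (\<lambda>n. a n * (y - x) ^ n) sums f y)"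

definition torus_norm :: "real \<Rightarrow> real" where
  "torus_norm \<phi> = (INF l::int. \<bar>of_int l - \<phi>\<bar>)"

end

theory Submission
  imports Defs
begin

(* Compactness and the identity theorem. If no pair (s, c) works, there are theta_n in [0,1] and
   psi_n in [-1/2,1/2] - {0} such that for l <= n the l-th derivative of v(. + psi_n) - v at
   theta_n is smaller than |psi_n| / (n + 1). Pass to a convergent subsequence with limit
   (theta0, psi0). If psi0 <> 0, every derivative of v(. + psi0) - v vanishes at theta0, so by the
   identity theorem psi0 (or psi0 + 1) is a period in (0,1). If psi0 = 0, the mean value theorem
   turns the difference quotients into derivatives: every derivative of v' vanishes at theta0,
   so v is constant. *)

definition has_powser_expansion :: "real \<Rightarrow> real \<Rightarrow> (nat \<Rightarrow> real) \<Rightarrow> (real \<Rightarrow> real) \<Rightarrow> bool" where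
  "has_powser_expansion x r a f \<longleftrightarrow> (\<forall>y. \<bar>y - x\<bar> < r \<longrightarrow> (\<lambda>n. a n * (y - x) ^ n) sums f y)"

lemma real_analytic_iff_powser:
  "real_analytic f \<longleftrightarrow> (\<forall>x. \<exists>r>0. \<exists>a. has_powser_expansion x r a f)"
  by (simp add: real_analytic_def has_powser_expansion_def)

lemma has_powser_expansion_DERIV:
  assumes f: "has_powser_expansion x r a f" and y: "\<bar>y - x\<bar> < r"
  shows "(f has_real_derivative (\<Sum>n. diffs a n * (y - x) ^ n)) (at y)"
    and "(\<lambda>n. diffs a n * (y - x) ^ n) sums deriv f y"
proof -
  have summable: "summable (\<lambda>n. a n * z ^ n)" if "\<bar>z\<bar> < r" for z
  proof -
    have "(\<lambda>n. a n * ((x + z) - x) ^ n) sums f (x + z)"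
      using f that unfolding has_powser_expansion_def by (metis add_diff_cancel_left')
    then show ?thesis by (simp add: sums_iff)
  qed
  define K where "K = (\<bar>y - x\<bar> + r) / 2"
  have "\<bar>y - x\<bar> < K" "K < r" using y by (auto simp: K_def)
  then have "DERIV (\<lambda>z. \<Sum>n. a n * z ^ n) (y - x) :> (\<Sum>n. diffs a n * (y - x) ^ n)"
    by (intro termdiffs_strong[OF summable[of K]]) auto
  then have "DERIV (\<lambda>t. \<Sum>n. a n * (t - x) ^ n) y :> (\<Sum>n. diffs a n * (y - x) ^ n)"
    using DERIV_shift[of "\<lambda>z. \<Sum>n. a n * z ^ n" _ y "- x"] by simp
  then show DERIV_f: "(f has_real_derivative (\<Sum>n. diffs a n * (y - x) ^ n)) (at y)"
  proof (rule has_field_derivative_transform_within_open)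
    show "open {t. \<bar>t - x\<bar> < r}" by (intro open_Collect_less continuous_intros)
  qed (use f y in \<open>auto simp: has_powser_expansion_def sums_iff\<close>)
  have "summable (\<lambda>n. diffs a n * (y - x) ^ n)"
    by (rule termdiff_converges[of _ r]) (use y summable in auto)
  then show "(\<lambda>n. diffs a n * (y - x) ^ n) sums deriv f y"
    using DERIV_imp_deriv[OF DERIV_f] by (simp add: summable_sums)
qed

lemma has_powser_expansion_deriv:
  "has_powser_expansion x r a f \<Longrightarrow> has_powser_expansion x r (diffs a) (deriv f)"
  using has_powser_expansion_DERIV(2) unfolding has_powser_expansion_def by blast

lemma has_powser_expansion_higher_deriv:
  "has_powser_expansion x r a f \<Longrightarrow> has_powser_expansion x r ((diffs ^^ k) a) ((deriv ^^ k) f)"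
  by (induction k) (auto intro: has_powser_expansion_deriv)

lemma funpow_diffs: "(diffs ^^ k) a n = fact (n + k) / fact n * (a (n + k) :: real)"
proof (induction k arbitrary: n)
  case (Suc k)
  have "(diffs ^^ Suc k) a n = of_nat (Suc n) * (diffs ^^ k) a (Suc n)"
    by (simp add: diffs_def)
  also have "\<dots> = of_nat (Suc n) * (fact (Suc n + k) / fact (Suc n)) * a (Suc n + k)"
    using Suc by simp
  also have "\<dots> = fact (n + Suc k) / fact n * a (n + Suc k)"
    by (simp add: field_simps del: of_nat_Suc)
  finally show ?case .
qed simp

lemma has_powser_expansion_higher_deriv_center:
  assumes "has_powser_expansion x r a f" and "r > 0"
  shows "(deriv ^^ k) f x = fact k * a k"
proof -
  have "(\<lambda>n. (diffs ^^ k) a n * (x - x) ^ n) sums (deriv ^^ k) f x"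
    using has_powser_expansion_higher_deriv[OF assms(1)] assms(2)
    unfolding has_powser_expansion_def by (metis abs_zero diff_self)
  then have "(deriv ^^ k) f x = (diffs ^^ k) a 0"
    using powser_zero sums_unique by (metis diff_self)
  then show ?thesis by (simp add: funpow_diffs)
qed

lemma real_analytic_DERIV:
  assumes "real_analytic f"
  shows "(f has_real_derivative deriv f x) (at x)"
proof -
  obtain r a where "r > 0" and "has_powser_expansion x r a f"
    using assms unfolding real_analytic_iff_powser by blast
  from has_powser_expansion_DERIV(1)[OF this(2), of x] this(1)
  have DERIV_f: "(f has_real_derivative (\<Sum>n. diffs a n * (x - x) ^ n)) (at x)" by simp
  then show ?thesis by (simp only: DERIV_imp_deriv[OF DERIV_f])
qed

lemma real_analytic_deriv: "real_analytic f \<Longrightarrow> real_analytic (deriv f)"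
  unfolding real_analytic_iff_powser using has_powser_expansion_deriv by blast

lemma real_analytic_higher_deriv: "real_analytic f \<Longrightarrow> real_analytic ((deriv ^^ k) f)"
  by (induction k) (auto intro: real_analytic_deriv)

lemma real_analytic_higher_deriv_DERIV:
  "real_analytic f \<Longrightarrow> ((deriv ^^ k) f has_real_derivative (deriv ^^ Suc k) f x) (at x)"
  using real_analytic_DERIV[OF real_analytic_higher_deriv] by simp

lemma real_analytic_higher_deriv_isCont: "real_analytic f \<Longrightarrow> isCont ((deriv ^^ k) f) x"
  using DERIV_isCont real_analytic_higher_deriv_DERIV by blast

lemma has_powser_expansion_shift:
  "has_powser_expansion (x + c) r a f \<Longrightarrow> has_powser_expansion x r a (\<lambda>t. f (t + c))"
  unfolding has_powser_expansion_def by (metis add_diff_cancel_right)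

lemma real_analytic_shift: "real_analytic f \<Longrightarrow> real_analytic (\<lambda>t. f (t + c))"
  unfolding real_analytic_iff_powser using has_powser_expansion_shift by blast

lemma real_analytic_diff:
  "real_analytic f \<Longrightarrow> real_analytic g \<Longrightarrow> real_analytic (\<lambda>t. f t - g t)"
  unfolding real_analytic_iff_powser
proof (intro allI)
  fix x
  assume "\<forall>x. \<exists>r>0. \<exists>a. has_powser_expansion x r a f"
    and "\<forall>x. \<exists>r>0. \<exists>a. has_powser_expansion x r a g"
  then obtain r1 a r2 b where "r1 > 0" "has_powser_expansion x r1 a f"
    and "r2 > 0" "has_powser_expansion x r2 b g"
    by metis
  then have "has_powser_expansion x (min r1 r2) (\<lambda>n. a n - b n) (\<lambda>t. f t - g t)"
    by (auto simp: has_powser_expansion_def left_diff_distrib intro: sums_diff)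
  with \<open>r1 > 0\<close> \<open>r2 > 0\<close> show "\<exists>r>0. \<exists>a. has_powser_expansion x r a (\<lambda>t. f t - g t)"
    by (metis min_less_iff_conj)
qed

lemma real_analytic_fun_eq_0:
  assumes f: "real_analytic f" and zero: "\<And>k. (deriv ^^ k) f x0 = 0"
  shows "f y = 0"
proof -
  define S where "S = {x. \<forall>k. (deriv ^^ k) f x = 0}"
  have "closed S"
  proof -
    have "S = (\<Inter>k. {x. (deriv ^^ k) f x = 0})" by (auto simp: S_def)
    moreover have "closed {x. (deriv ^^ k) f x = 0}" for k
    proof (rule closed_Collect_eq)
      show "continuous_on UNIV ((deriv ^^ k) f)"
        by (intro continuous_at_imp_continuous_on ballI real_analytic_higher_deriv_isCont f)
    qed simp
    ultimately show ?thesis by auto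
  qed
  moreover have "open S"
  proof (unfold open_dist, intro ballI)
    fix x assume "x \<in> S"
    from f obtain r a where "r > 0" and f_x: "has_powser_expansion x r a f"
      unfolding real_analytic_iff_powser by blast
    have "fact k * a k = 0" for k
      using has_powser_expansion_higher_deriv_center[OF f_x \<open>r > 0\<close>, of k] \<open>x \<in> S\<close>
      by (simp add: S_def)
    then have "(diffs ^^ k) a = (\<lambda>_. 0)" for k
      by (induction k) (auto simp: diffs_def)
    then have "z \<in> S" if "dist z x < r" for z
    proof -
      have "(\<lambda>n. (diffs ^^ k) a n * (z - x) ^ n) sums (deriv ^^ k) f z" for k
        using has_powser_expansion_higher_deriv[OF f_x] that
        unfolding has_powser_expansion_def dist_real_def by blast
      then have "(deriv ^^ k) f z = (\<Sum>n. 0)" for k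
        using \<open>\<And>k. (diffs ^^ k) a = (\<lambda>_. 0)\<close> sums_unique by fastforce
      then show ?thesis by (simp add: S_def)
    qed
    with \<open>r > 0\<close> show "\<exists>e>0. \<forall>z. dist z x < e \<longrightarrow> z \<in> S" by blast
  qed
  moreover have "x0 \<in> S" using zero by (simp add: S_def)
  ultimately have "y \<in> S" using clopen by blast
  then have "(deriv ^^ 0) f y = 0" unfolding S_def by blast
  then show ?thesis by simp
qed

lemma deriv_shift: "deriv (\<lambda>t. f (t + c)) x = deriv f (x + c :: real)"
  unfolding deriv_def using DERIV_shift[of f _ x c] by simp

lemma higher_deriv_shift: "(deriv ^^ k) (\<lambda>t. f (t + c)) = (\<lambda>t. (deriv ^^ k) f (t + c :: real))"
  by (induction k) (auto simp: deriv_shift)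

lemma higher_deriv_diff:
  assumes f: "real_analytic f" and g: "real_analytic g"
  shows "(deriv ^^ k) (\<lambda>t. f t - g t) = (\<lambda>t. (deriv ^^ k) f t - (deriv ^^ k) g t)"
proof (induction k)
  case (Suc k)
  have "deriv (\<lambda>t. (deriv ^^ k) f t - (deriv ^^ k) g t) x
        = (deriv ^^ Suc k) f x - (deriv ^^ Suc k) g x" for x
    by (intro DERIV_imp_deriv DERIV_diff real_analytic_higher_deriv_DERIV f g)
  then show ?case using Suc by auto
qed simp

lemma higher_deriv_diff_shift:
  assumes "real_analytic f"
  shows "(deriv ^^ k) (\<lambda>t. f (t + c) - f t) x = (deriv ^^ k) f (x + c) - (deriv ^^ k) f x"
  by (simp add: higher_deriv_diff[OF real_analytic_shift[OF assms] assms] higher_deriv_shift)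

lemma higher_deriv_periodic:
  assumes "\<And>x. v (x + 1) = v x" and "y - x \<in> \<int>"
  shows "(deriv ^^ k) v y = (deriv ^^ k) v (x :: real)"
proof -
  have "(\<lambda>t. v (t + 1)) = v" using assms(1) by auto
  then interpret periodic_fun_simple' "(deriv ^^ k) v"
    using higher_deriv_shift[of k v 1] by unfold_locales metis
  from \<open>y - x \<in> \<int>\<close> obtain m where "y = x + of_int m"
    by (metis Ints_cases add_diff_cancel_left' add_diff_eq)
  then show ?thesis by (simp add: plus_of_int)
qed

lemma MVT_shift:
  assumes "\<And>y. (f has_real_derivative f' y) (at y)"
  shows "\<exists>\<xi>. \<bar>\<xi> - x\<bar> \<le> \<bar>h\<bar> \<and> f (x + h) - f x = h * f' \<xi>"
proof (cases h "0 :: real" rule: linorder_cases)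
  case less
  with MVT2[of "x + h" x f f'] assms obtain z
    where "x + h < z" "z < x" "f x - f (x + h) = (x - (x + h)) * f' z"
    by auto
  then show ?thesis by (intro exI[of _ z]) (auto simp: algebra_simps)
next
  case greater
  with MVT2[of x "x + h" f f'] assms obtain z
    where "x < z" "z < x + h" "f (x + h) - f x = (x + h - x) * f' z"
    by auto
  then show ?thesis by (intro exI[of _ z]) auto
qed auto

lemma difference_quotient_tendsto:
  assumes g': "\<And>y. (g has_real_derivative g' y) (at y)" and cont: "isCont g' x"
    and \<theta>: "\<theta> \<longlonglongrightarrow> x" and \<psi>: "\<psi> \<longlonglongrightarrow> 0" and nonzero: "\<And>n. \<psi> n \<noteq> 0"
  shows "(\<lambda>n. (g (\<theta> n + \<psi> n) - g (\<theta> n)) / \<psi> n) \<longlonglongrightarrow> g' x"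
proof -
  have "\<forall>n. \<exists>\<xi>. \<bar>\<xi> - \<theta> n\<bar> \<le> \<bar>\<psi> n\<bar> \<and> g (\<theta> n + \<psi> n) - g (\<theta> n) = \<psi> n * g' \<xi>"
    using MVT_shift[OF g'] by blast
  then obtain \<xi> where \<xi>: "\<And>n. \<bar>\<xi> n - \<theta> n\<bar> \<le> \<bar>\<psi> n\<bar> \<and> g (\<theta> n + \<psi> n) - g (\<theta> n) = \<psi> n * g' (\<xi> n)"
    by metis
  have "(\<lambda>n. \<xi> n - \<theta> n) \<longlonglongrightarrow> 0"
    by (rule Lim_null_comparison[of _ "\<lambda>n. \<bar>\<psi> n\<bar>"]) (use \<xi> tendsto_rabs_zero[OF \<psi>] in auto)
  then have "(\<lambda>n. (\<xi> n - \<theta> n) + \<theta> n) \<longlonglongrightarrow> 0 + x" by (intro tendsto_add \<theta>)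
  then have "(\<lambda>n. g' (\<xi> n)) \<longlonglongrightarrow> g' x" by (intro isCont_tendsto_compose[OF cont]) simp
  then show ?thesis using \<xi> nonzero by simp
qed

lemma flat_differences_limit_shift_invariant:
  assumes f: "real_analytic f" and \<theta>: "\<theta> \<longlonglongrightarrow> \<theta>0" and \<psi>: "\<psi> \<longlonglongrightarrow> \<psi>0"
    and flat: "\<And>l. (\<lambda>n. (deriv ^^ l) f (\<theta> n + \<psi> n) - (deriv ^^ l) f (\<theta> n)) \<longlonglongrightarrow> 0"
  shows "f (x + \<psi>0) = f x"
proof -
  have "(\<lambda>n. (deriv ^^ l) f (\<theta> n + \<psi> n) - (deriv ^^ l) f (\<theta> n))
          \<longlonglongrightarrow> (deriv ^^ l) f (\<theta>0 + \<psi>0) - (deriv ^^ l) f \<theta>0" for l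
    by (intro tendsto_diff tendsto_add isCont_tendsto_compose[OF real_analytic_higher_deriv_isCont[OF f]] \<theta> \<psi>)
  then have "(deriv ^^ l) f (\<theta>0 + \<psi>0) - (deriv ^^ l) f \<theta>0 = 0" for l
    using flat LIMSEQ_unique by blast
  then have "(deriv ^^ l) (\<lambda>t. f (t + \<psi>0) - f t) \<theta>0 = 0" for l
    by (simp add: higher_deriv_diff_shift[OF f])
  then have "f (x + \<psi>0) - f x = 0"
    by (rule real_analytic_fun_eq_0[OF real_analytic_diff[OF real_analytic_shift[OF f] f]])
  then show ?thesis by simp
qed

lemma flat_quotients_limit_constant:
  assumes f: "real_analytic f" and \<theta>: "\<theta> \<longlonglongrightarrow> \<theta>0" and \<psi>: "\<psi> \<longlonglongrightarrow> 0"
    and nonzero: "\<And>n. \<psi> n \<noteq> 0"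
    and flat: "\<And>l. (\<lambda>n. ((deriv ^^ l) f (\<theta> n + \<psi> n) - (deriv ^^ l) f (\<theta> n)) / \<psi> n) \<longlonglongrightarrow> 0"
  shows "f x = f \<theta>0"
proof -
  have "(\<lambda>n. ((deriv ^^ l) f (\<theta> n + \<psi> n) - (deriv ^^ l) f (\<theta> n)) / \<psi> n)
          \<longlonglongrightarrow> (deriv ^^ Suc l) f \<theta>0" for l
    by (rule difference_quotient_tendsto[OF real_analytic_higher_deriv_DERIV[OF f]
          real_analytic_higher_deriv_isCont[OF f] \<theta> \<psi> nonzero])
  then have "(deriv ^^ Suc l) f \<theta>0 = 0" for l
    using flat LIMSEQ_unique by blast
  then have "(deriv ^^ l) (deriv f) \<theta>0 = 0" for l
    using funpow_Suc_right[of l deriv] by (metis comp_apply)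
  then have "deriv f y = 0" for y
    by (rule real_analytic_fun_eq_0[OF real_analytic_deriv[OF f]])
  then have "\<forall>y. (f has_real_derivative 0) (at y)"
    using real_analytic_DERIV[OF f] by simp
  then show ?thesis by (rule DERIV_isconst_all)
qed

lemma small_period_eq_0:
  fixes v :: "real \<Rightarrow> real"
  assumes periodic: "\<And>x. v (x + 1) = v x"
    and minimal: "\<And>p. 0 < p \<Longrightarrow> p < 1 \<Longrightarrow> \<not> (\<forall>x. v (x + p) = v x)"
    and period: "\<And>x. v (x + p) = v x" and small: "\<bar>p\<bar> \<le> 1/2"
  shows "p = 0"
proof (rule ccontr)
  assume "p \<noteq> 0"
  have "v (x + (p + 1)) = v x" for x
    using periodic[of "x + p"] period[of x] by (simp add: algebra_simps)
  with period minimal[of p] minimal[of "p + 1"] small \<open>p \<noteq> 0\<close> show False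
    by (cases "p > 0") auto
qed

lemma periodic_real_analytic_no_flat_sequence:
  fixes v :: "real \<Rightarrow> real" and \<theta> \<psi> :: "nat \<Rightarrow> real"
  assumes analytic: "real_analytic v"
    and periodic: "\<And>x. v (x + 1) = v x"
    and minimal: "\<And>p. 0 < p \<Longrightarrow> p < 1 \<Longrightarrow> \<not> (\<forall>x. v (x + p) = v x)"
    and nonconst: "\<not> (\<exists>C. \<forall>x. v x = C)"
    and \<theta>: "\<And>n. \<theta> n \<in> {0..1}" and \<psi>: "\<And>n. \<psi> n \<in> {-1/2..1/2}" and nonzero: "\<And>n. \<psi> n \<noteq> 0"
    and flat: "\<And>l. (\<lambda>n. ((deriv ^^ l) v (\<theta> n + \<psi> n) - (deriv ^^ l) v (\<theta> n)) / \<psi> n) \<longlonglongrightarrow> 0"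
  shows False
proof -
  have "seq_compact ({0..1::real} \<times> {-1/2..1/2::real})"
    by (intro compact_imp_seq_compact compact_Times) auto
  then obtain lim r where lim: "lim \<in> {0..1} \<times> {-1/2..1/2}" and "strict_mono r"
    and "((\<lambda>n. (\<theta> n, \<psi> n)) \<circ> r) \<longlonglongrightarrow> lim"
    by (rule seq_compactE[where f = "\<lambda>n. (\<theta> n, \<psi> n)"]) (use \<theta> \<psi> in auto)
  then have \<theta>_r: "(\<theta> \<circ> r) \<longlonglongrightarrow> fst lim" and \<psi>_r: "(\<psi> \<circ> r) \<longlonglongrightarrow> snd lim"
    by (auto dest: tendsto_fst tendsto_snd simp: o_def)
  have nonzero_r: "(\<psi> \<circ> r) n \<noteq> 0" for n
    using nonzero by simp
  have flat_r: "(\<lambda>n. ((deriv ^^ l) v ((\<theta> \<circ> r) n + (\<psi> \<circ> r) n) - (deriv ^^ l) v ((\<theta> \<circ> r) n))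
      / (\<psi> \<circ> r) n) \<longlonglongrightarrow> 0" for l
    using LIMSEQ_subseq_LIMSEQ[OF flat \<open>strict_mono r\<close>] by (simp add: o_def)
  show False
  proof (cases "snd lim = 0")
    case True
    with \<psi>_r have "(\<psi> \<circ> r) \<longlonglongrightarrow> 0" by simp
    then have "v x = v (fst lim)" for x
      by (rule flat_quotients_limit_constant[OF analytic \<theta>_r _ nonzero_r flat_r])
    with nonconst show False by blast
  next
    case False
    have "(\<lambda>n. (\<psi> \<circ> r) n * (((deriv ^^ l) v ((\<theta> \<circ> r) n + (\<psi> \<circ> r) n) - (deriv ^^ l) v ((\<theta> \<circ> r) n))
        / (\<psi> \<circ> r) n)) \<longlonglongrightarrow> snd lim * 0" for l
      by (intro tendsto_mult \<psi>_r flat_r)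
    then have "(\<lambda>n. (deriv ^^ l) v ((\<theta> \<circ> r) n + (\<psi> \<circ> r) n) - (deriv ^^ l) v ((\<theta> \<circ> r) n)) \<longlonglongrightarrow> 0" for l
      using nonzero_r by simp
    then have "v (x + snd lim) = v x" for x
      by (rule flat_differences_limit_shift_invariant[OF analytic \<theta>_r \<psi>_r])
    then have "snd lim = 0"
      using small_period_eq_0[OF periodic minimal] lim by force
    with False show False by blast
  qed
qed

lemma periodic_real_analytic_difference_lower_bound:
  fixes v :: "real \<Rightarrow> real"
  assumes analytic: "real_analytic v"
    and periodic: "\<And>x. v (x + 1) = v x"
    and minimal: "\<And>p. 0 < p \<Longrightarrow> p < 1 \<Longrightarrow> \<not> (\<forall>x. v (x + p) = v x)"
    and nonconst: "\<not> (\<exists>C. \<forall>x. v x = C)"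
  shows "\<exists>s c. c > 0 \<and> (\<forall>\<theta>\<in>{0..1}. \<forall>\<psi>\<in>{-1/2..1/2}.
           \<exists>l\<le>s. c * \<bar>\<psi>\<bar> \<le> \<bar>(deriv ^^ l) v (\<theta> + \<psi>) - (deriv ^^ l) v \<theta>\<bar>)"
proof (rule ccontr)
  define D where "D l = (deriv ^^ l) v" for l
  assume no_bound: "\<not> ?thesis"
  have "\<exists>\<theta>\<in>{0..1}. \<exists>\<psi>\<in>{-1/2..1/2}.
      \<forall>l\<le>n. \<bar>D l (\<theta> + \<psi>) - D l \<theta>\<bar> < inverse (Suc n) * \<bar>\<psi>\<bar>" for n
  proof -
    have "inverse (real (Suc n)) > 0" by simp
    with no_bound have "\<exists>\<theta>\<in>{0..1}. \<exists>\<psi>\<in>{-1/2..1/2}.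
        \<forall>l\<le>n. \<not> inverse (Suc n) * \<bar>\<psi>\<bar> \<le> \<bar>(deriv ^^ l) v (\<theta> + \<psi>) - (deriv ^^ l) v \<theta>\<bar>"
      by blast
    then show ?thesis unfolding D_def not_le .
  qed
  then obtain T P where T: "\<And>n. T n \<in> {0..1}" and P: "\<And>n. P n \<in> {-1/2..1/2}"
    and flat: "\<And>n l. l \<le> n \<Longrightarrow> \<bar>D l (T n + P n) - D l (T n)\<bar> < inverse (Suc n) * \<bar>P n\<bar>"
    by metis
  have nonzero: "P n \<noteq> 0" for n
    using flat[of 0 n] by auto
  have "(\<lambda>n. (D l (T n + P n) - D l (T n)) / P n) \<longlonglongrightarrow> 0" for l
  proof (rule Lim_null_comparison[OF _ LIMSEQ_inverse_real_of_nat])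
    show "\<forall>\<^sub>F n in sequentially. norm ((D l (T n + P n) - D l (T n)) / P n) \<le> inverse (Suc n)"
    proof (rule eventually_sequentiallyI)
      fix n assume "l \<le> n"
      with flat[of l n] nonzero[of n]
      show "norm ((D l (T n + P n) - D l (T n)) / P n) \<le> inverse (Suc n)"
        by (simp add: abs_divide divide_le_eq)
    qed
  qed
  then show False
    using periodic_real_analytic_no_flat_sequence[of v T P, OF assms T P nonzero] by (simp add: D_def)
qed

lemma torus_norm_le: "torus_norm \<phi> \<le> \<bar>of_int m - \<phi>\<bar>"
  unfolding torus_norm_def by (rule cINF_lower) (auto intro: bdd_belowI[of _ 0])

lemma torus_fundamental_domain:
  fixes \<theta> \<phi> :: real
  obtains \<theta>' \<psi> where "\<theta>' \<in> {0..1}" "\<psi> \<in> {-1/2..1/2}" "torus_norm \<phi> \<le> \<bar>\<psi>\<bar>"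
    "\<theta>' - \<theta> \<in> \<int>" "\<theta>' + \<psi> - (\<theta> + \<phi>) \<in> \<int>"
proof
  show "frac \<theta> \<in> {0..1}" using frac_lt_1[of \<theta>] by simp
  show "\<phi> - of_int (round \<phi>) \<in> {-1/2..1/2}"
    using of_int_round_abs_le[of \<phi>] unfolding atLeastAtMost_iff by arith
  show "torus_norm \<phi> \<le> \<bar>\<phi> - of_int (round \<phi>)\<bar>"
    using torus_norm_le[of \<phi> "round \<phi>"] by (simp add: abs_minus_commute)
  show "frac \<theta> - \<theta> \<in> \<int>" "frac \<theta> + (\<phi> - of_int (round \<phi>)) - (\<theta> + \<phi>) \<in> \<int>"
    by (simp_all add: frac_def)
qed

theorem lemmaB1:
  fixes v :: "real \<Rightarrow> real"
  assumes analytic: "real_analytic v"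
    and periodic: "\<And>x. v (x + 1) = v x"
    and minimal: "\<And>p. 0 < p \<Longrightarrow> p < 1 \<Longrightarrow> \<not> (\<forall>x. v (x + p) = v x)"
    and nonconst: "\<not> (\<exists>C. \<forall>x. v x = C)"
  shows "\<exists>s::nat. \<exists>c>0. \<forall>\<theta> \<phi>.
           Max ((\<lambda>l. \<bar>(deriv ^^ l) (\<lambda>t. v (t + \<phi>) - v t) \<theta>\<bar>) ` {0..s})
             \<ge> c * torus_norm \<phi>"
proof -
  obtain s c where "c > 0" and bound: "\<forall>\<theta>\<in>{0..1}. \<forall>\<psi>\<in>{-1/2..1/2}.
      \<exists>l\<le>s. c * \<bar>\<psi>\<bar> \<le> \<bar>(deriv ^^ l) v (\<theta> + \<psi>) - (deriv ^^ l) v \<theta>\<bar>"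
    using periodic_real_analytic_difference_lower_bound[OF assms] by blast
  have "c * torus_norm \<phi> \<le> Max ((\<lambda>l. \<bar>(deriv ^^ l) (\<lambda>t. v (t + \<phi>) - v t) \<theta>\<bar>) ` {0..s})" for \<theta> \<phi>
  proof -
    obtain \<theta>' \<psi> where "\<theta>' \<in> {0..1}" "\<psi> \<in> {-1/2..1/2}" "torus_norm \<phi> \<le> \<bar>\<psi>\<bar>"
      and shifts: "\<theta>' - \<theta> \<in> \<int>" "\<theta>' + \<psi> - (\<theta> + \<phi>) \<in> \<int>"
      by (rule torus_fundamental_domain)
    with bound obtain l where "l \<le> s"
      and l: "c * \<bar>\<psi>\<bar> \<le> \<bar>(deriv ^^ l) v (\<theta>' + \<psi>) - (deriv ^^ l) v \<theta>'\<bar>"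
      by blast
    have "c * torus_norm \<phi> \<le> c * \<bar>\<psi>\<bar>"
      using \<open>c > 0\<close> \<open>torus_norm \<phi> \<le> \<bar>\<psi>\<bar>\<close> by simp
    also have "\<dots> \<le> \<bar>(deriv ^^ l) (\<lambda>t. v (t + \<phi>) - v t) \<theta>\<bar>"
      using l by (simp add: higher_deriv_diff_shift[OF analytic] higher_deriv_periodic[where v = v, OF periodic shifts(1)]
          higher_deriv_periodic[where v = v, OF periodic shifts(2)])
    also have "\<dots> \<le> Max ((\<lambda>l. \<bar>(deriv ^^ l) (\<lambda>t. v (t + \<phi>) - v t) \<theta>\<bar>) ` {0..s})"
      using \<open>l \<le> s\<close> by (intro Max_ge) auto
    finally show ?thesis .
  qed
  with \<open>c > 0\<close> show ?thesis by auto
qed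

end
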